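(* Let $\theta\in(0,1)$ be irrational, $k\ge1$ even, $\ell\ge1$, and $1\le i\le q_k$. (a) If $a_{k+j}=1$ for all $2\le j\le\ell$, then $$\#\{1\le j\le q_{k+\ell}: j\theta\in(i\theta-\|q_k\theta\|,\ i\theta+\tilde r_{k+1}\|q_k\theta\|+\|q_{k+1}\theta\|)\}\ge u_\ell\tilde r_{k+1}+u_{\ell+1}.$$ (b) If $a_{k+2}=2$ and $a_{k+j}=1$ for all $3\le j\le\ell$, then $$\#\{1\le j\le q_{k+\ell}: j\theta\in(i\theta-\|q_{k+1}\theta\|-\|q_{k+2}\theta\|,\ i\theta+\tilde r_{k+1}\|q_k\theta\|+\|q_{k+1}\theta\|)\}\ge u_{\ell+1}(\tilde r_{k+1}+1).$$
   Context: $\mathbb T=\mathbb R/\mathbb Z$, points identified with fractional parts; $(x-a,x+b)$ denotes the projection to $\mathbb T$ of the real interval. $\|t\|$ is the distance to the nearest integer. $\theta=[0;a_1,a_2,\dots]$ with convergent denominators $q_0=1$, $q_{k+1}=a_{k+1}q_k+q_{k-1}$. $(u_j)$ is the Fibonacci sequence $u_0=0,u_1=1,u_{j+1}=u_j+u_{j-1}$. For $k\ge0$: $r_{k+1}=\lfloor\sqrt{4a_{k+1}+5}\rfloor-3$ if $a_{k+1}\ne2$ and $r_{k+1}=1$ if $a_{k+1}=2$; $\tilde r_{k+1}=2$ if $a_{k+1}=4$ and $a_{k+2}\ge2$, and $\tilde r_{k+1}=r_{k+1}$ otherwise. *)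

theory Defs
  imports Complex_Main "HOL-Number_Theory.Fib"
begin

definition gauss :: "real \<Rightarrow> real" where
  "gauss x = frac (1 / x)"

text \<open>Partial quotients: cf_a theta n = a_n for n \<ge> 1 (cf_a theta 0 = 0, the integer part).\<close>
definition cf_a :: "real \<Rightarrow> nat \<Rightarrow> nat" where
  "cf_a \<theta> n = (if n = 0 then 0 else nat \<lfloor>1 / ((gauss ^^ (n - 1)) \<theta>)\<rfloor>)"

fun cf_q :: "real \<Rightarrow> nat \<Rightarrow> nat" where
  "cf_q \<theta> 0 = 1"
| "cf_q \<theta> (Suc 0) = cf_a \<theta> 1"
| "cf_q \<theta> (Suc (Suc n)) = cf_a \<theta> (Suc (Suc n)) * cf_q \<theta> (Suc n) + cf_q \<theta> n"

definition dnint :: "real \<Rightarrow> real" where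
  "dnint t = min (frac t) (1 - frac t)"

definition cf_r :: "real \<Rightarrow> nat \<Rightarrow> nat" where
  "cf_r \<theta> m = (if cf_a \<theta> m = 2 then 1 else nat \<lfloor>sqrt (4 * real (cf_a \<theta> m) + 5)\<rfloor> - 3)"

definition cf_rt :: "real \<Rightarrow> nat \<Rightarrow> nat" where
  "cf_rt \<theta> m = (if cf_a \<theta> m = 4 \<and> cf_a \<theta> (m + 1) \<ge> 2 then 2 else cf_r \<theta> m)"

text \<open>y (mod 1) lies in the projection to the torus of the real interval (x - a, x + b).\<close>
definition torus_in :: "real \<Rightarrow> real \<Rightarrow> real \<Rightarrow> real \<Rightarrow> bool" where
  "torus_in y x a b \<longleftrightarrow> (\<exists>n::int. x - a < y + of_int n \<and> y + of_int n < x + b)"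

end

theory Submission
  imports Defs
begin

text \<open>
  Write \<open>\<beta>\<^sub>n = \<parallel>q\<^sub>n\<theta>\<parallel>\<close> and call \<open>c\<close> admissible at level \<open>m\<close> if \<open>c + q\<^sub>k \<le> q\<^sub>m\<close> and \<open>c\<theta>\<close>
  lies modulo 1 in the window \<open>(-Lo, Hi)\<close> shrunk by \<open>\<beta>\<^sub>m\<close> on both sides; then every \<open>i + c\<close>
  with \<open>1 \<le> i \<le> q\<^sub>k\<close> is among the \<open>j \<le> q\<^sub>m\<close> being counted. Because \<open>q\<^sub>m\<^sub>+\<^sub>1\<theta>\<close> is within
  \<open>\<beta>\<^sub>m\<^sub>+\<^sub>1\<close> of an integer, \<open>\<beta>\<^sub>m\<^sub>+\<^sub>2 + \<beta>\<^sub>m\<^sub>+\<^sub>1 \<le> \<beta>\<^sub>m\<close> and \<open>q\<^sub>m\<^sub>+\<^sub>2 \<ge> q\<^sub>m\<^sub>+\<^sub>1 + q\<^sub>m\<close>, admissible sets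
  \<open>X\<close> at level \<open>m\<close> and \<open>Y\<close> at level \<open>m + 1\<close> combine to the admissible set \<open>Y \<union> (q\<^sub>m\<^sub>+\<^sub>1 + X)\<close>
  at level \<open>m + 2\<close>, and this union is disjoint. Starting from the multiples \<open>t q\<^sub>k\<close>, \<open>t \<le> r\<close>,
  at level \<open>k + 1\<close> (note \<open>(r + 1) q\<^sub>k \<le> q\<^sub>k\<^sub>+\<^sub>1\<close> as \<open>r < a\<^sub>k\<^sub>+\<^sub>1\<close>), together with some of the
  points \<open>q\<^sub>k\<^sub>+\<^sub>1 + t q\<^sub>k\<close> at level \<open>k + 2\<close>, the sizes grow like Fibonacci numbers.
\<close>

lemma gauss_irrational:
  assumes "x \<notin> \<rat>"
  shows "gauss x \<notin> \<rat> \<and> 0 < gauss x \<and> gauss x < 1"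
proof -
  have "1 / x \<notin> \<rat>"
    using assms Rats_divide[OF Rats_1, of "1 / x"] by auto
  then have irr: "gauss x \<notin> \<rat>"
    unfolding gauss_def frac_def by (metis Rats_add Rats_of_int diff_add_cancel)
  then have "gauss x \<noteq> 0"
    by auto
  then show ?thesis
    using irr frac_ge_0[of "1 / x"] frac_lt_1[of "1 / x"] by (simp add: gauss_def)
qed

definition gauss_orbit :: "real \<Rightarrow> nat \<Rightarrow> real" where
  "gauss_orbit \<theta> n = (gauss ^^ n) \<theta>"

lemma gauss_orbit_Suc: "gauss_orbit \<theta> (Suc n) = frac (1 / gauss_orbit \<theta> n)"
  by (simp add: gauss_orbit_def gauss_def)

lemma cf_a_Suc: "cf_a \<theta> (Suc n) = nat \<lfloor>1 / gauss_orbit \<theta> n\<rfloor>"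
  by (simp add: cf_a_def gauss_orbit_def)

fun cf_p :: "real \<Rightarrow> nat \<Rightarrow> int" where
  "cf_p \<theta> 0 = 0"
| "cf_p \<theta> (Suc 0) = 1"
| "cf_p \<theta> (Suc (Suc n)) = int (cf_a \<theta> (Suc (Suc n))) * cf_p \<theta> (Suc n) + cf_p \<theta> n"

text \<open>\<open>cf_beta \<theta> n = x\<^sub>0 \<cdots> x\<^sub>n\<close> for the Gauss orbit \<open>x\<^sub>n\<close>; it equals \<open>\<parallel>q\<^sub>n\<theta>\<parallel>\<close> for \<open>n \<ge> 1\<close>.\<close>

definition cf_beta :: "real \<Rightarrow> nat \<Rightarrow> real" where
  "cf_beta \<theta> n = (\<Prod>m\<le>n. gauss_orbit \<theta> m)"

lemma cf_beta_0 [simp]: "cf_beta \<theta> 0 = \<theta>"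
  by (simp add: cf_beta_def gauss_orbit_def)

lemma cf_beta_Suc: "cf_beta \<theta> (Suc n) = cf_beta \<theta> n * gauss_orbit \<theta> (Suc n)"
  by (simp add: cf_beta_def)

lemma cf_rt_less_cf_a:
  assumes "cf_a \<theta> m \<ge> 1"
  shows "cf_rt \<theta> m < cf_a \<theta> m"
proof -
  define a where "a = cf_a \<theta> m"
  have "4 * real a + 5 < (real a + 3)\<^sup>2"
    by (simp add: power2_eq_square algebra_simps add_pos_nonneg)
  then have "sqrt (4 * real a + 5) < real a + 3"
    using real_sqrt_less_mono by fastforce
  then have "nat \<lfloor>sqrt (4 * real a + 5)\<rfloor> - 3 < a"
    using assms a_def by linarith
  then show ?thesis
    using assms by (auto simp: cf_rt_def cf_r_def a_def[symmetric])
qed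

lemma cf_a_mult_cf_q_le: "cf_a \<theta> (Suc n) * cf_q \<theta> n \<le> cf_q \<theta> (Suc n)"
  by (cases n) simp_all

locale irrational_unit_interval =
  fixes \<theta> :: real
  assumes pos: "0 < \<theta>" and less_one: "\<theta> < 1" and irrational: "\<theta> \<notin> \<rat>"
begin

lemma gauss_orbit_bounds: "0 < gauss_orbit \<theta> n" "gauss_orbit \<theta> n < 1"
proof -
  have "gauss_orbit \<theta> n \<notin> \<rat> \<and> 0 < gauss_orbit \<theta> n \<and> gauss_orbit \<theta> n < 1"
    by (induction n) (use pos less_one irrational gauss_irrational in \<open>auto simp: gauss_orbit_def\<close>)
  then show "0 < gauss_orbit \<theta> n" "gauss_orbit \<theta> n < 1"
    by auto
qed

lemma cf_a_Suc_eq: "real (cf_a \<theta> (Suc n)) = 1 / gauss_orbit \<theta> n - gauss_orbit \<theta> (Suc n)"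
proof -
  have "0 \<le> \<lfloor>1 / gauss_orbit \<theta> n\<rfloor>"
    using gauss_orbit_bounds(1)[of n] by simp
  then show ?thesis
    by (simp add: cf_a_Suc gauss_orbit_Suc frac_def)
qed

lemma cf_a_ge_1:
  assumes "n \<ge> 1"
  shows "cf_a \<theta> n \<ge> 1"
proof -
  obtain m where n: "n = Suc m"
    using assms by (cases n) auto
  have "1 \<le> 1 / gauss_orbit \<theta> m"
    using gauss_orbit_bounds[of m] by simp
  then show ?thesis
    unfolding n cf_a_Suc by linarith
qed

lemma cf_q_ge_1: "cf_q \<theta> n \<ge> 1"
  using cf_a_ge_1[of 1] by (induction n rule: fib.induct) auto

lemma cf_q_add_le: "cf_q \<theta> (Suc n) + cf_q \<theta> n \<le> cf_q \<theta> (Suc (Suc n))"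
proof -
  have "1 * cf_q \<theta> (Suc n) \<le> cf_a \<theta> (Suc (Suc n)) * cf_q \<theta> (Suc n)"
    using cf_a_ge_1[of "Suc (Suc n)"] by (intro mult_le_mono1) simp
  then show ?thesis
    by simp
qed

lemma cf_q_le_Suc: "cf_q \<theta> n \<le> cf_q \<theta> (Suc n)"
proof (cases n)
  case 0
  then show ?thesis
    using cf_a_ge_1[of 1] by simp
next
  case (Suc m)
  then show ?thesis
    using cf_q_add_le[of m] unfolding Suc by linarith
qed

lemma cf_beta_pos: "0 < cf_beta \<theta> n"
  by (induction n) (simp_all add: pos cf_beta_Suc gauss_orbit_bounds)

lemma cf_beta_Suc_less: "cf_beta \<theta> (Suc n) < cf_beta \<theta> n"
  using gauss_orbit_bounds[of "Suc n"] cf_beta_pos[of n] by (simp add: cf_beta_Suc)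

lemma cf_beta_recurrence:
  "cf_beta \<theta> (Suc (Suc n)) + real (cf_a \<theta> (Suc (Suc n))) * cf_beta \<theta> (Suc n) = cf_beta \<theta> n"
  using gauss_orbit_bounds(1)[of "Suc n"] by (simp add: cf_beta_Suc cf_a_Suc_eq field_simps)

lemma cf_beta_add_le: "cf_beta \<theta> (Suc (Suc n)) + cf_beta \<theta> (Suc n) \<le> cf_beta \<theta> n"
proof -
  have "cf_beta \<theta> (Suc n) \<le> real (cf_a \<theta> (Suc (Suc n))) * cf_beta \<theta> (Suc n)"
    using cf_a_ge_1[of "Suc (Suc n)"] cf_beta_pos[of "Suc n"] by simp
  then show ?thesis
    using cf_beta_recurrence[of n] by linarith
qed

lemma cf_q_theta_minus_p: "real (cf_q \<theta> n) * \<theta> - of_int (cf_p \<theta> n) = (-1) ^ n * cf_beta \<theta> n"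
proof (induction n rule: fib.induct)
  case 1
  show ?case by simp
next
  case 2
  show ?case
    using gauss_orbit_bounds(1)[of 0] pos
    by (simp add: cf_beta_Suc cf_a_Suc_eq gauss_orbit_def field_simps)
next
  case (3 n)
  have "real (cf_q \<theta> (Suc (Suc n))) * \<theta> - of_int (cf_p \<theta> (Suc (Suc n)))
      = real (cf_a \<theta> (Suc (Suc n))) * (real (cf_q \<theta> (Suc n)) * \<theta> - of_int (cf_p \<theta> (Suc n)))
        + (real (cf_q \<theta> n) * \<theta> - of_int (cf_p \<theta> n))"
    by (simp add: algebra_simps)
  also have "\<dots> = real (cf_a \<theta> (Suc (Suc n))) * ((-1) ^ Suc n * cf_beta \<theta> (Suc n))
      + (-1) ^ n * cf_beta \<theta> n"
    using "3.IH" by simp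
  also have "\<dots> = (-1) ^ n * (cf_beta \<theta> n - real (cf_a \<theta> (Suc (Suc n))) * cf_beta \<theta> (Suc n))"
    by (simp add: algebra_simps)
  also have "\<dots> = (-1) ^ Suc (Suc n) * cf_beta \<theta> (Suc (Suc n))"
    using cf_beta_recurrence[of n] by simp
  finally show ?case .
qed

lemma abs_cf_q_theta_minus_p: "\<bar>real (cf_q \<theta> n) * \<theta> - of_int (cf_p \<theta> n)\<bar> = cf_beta \<theta> n"
  using cf_beta_pos[of n] by (simp add: cf_q_theta_minus_p abs_mult power_abs)

lemma cf_beta_less_half:
  assumes "n \<ge> 1"
  shows "cf_beta \<theta> n < 1 / 2"
proof -
  have "cf_beta \<theta> 1 = 1 - real (cf_a \<theta> 1) * \<theta>"
    using cf_a_Suc_eq[of 0] pos by (simp add: cf_beta_Suc gauss_orbit_def field_simps)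
  moreover have "\<theta> \<le> real (cf_a \<theta> 1) * \<theta>"
    using cf_a_ge_1[of 1] pos by simp
  moreover have "cf_beta \<theta> 1 < \<theta>"
    using cf_beta_Suc_less[of 0] by simp
  moreover have "cf_beta \<theta> n \<le> cf_beta \<theta> 1"
    using lift_Suc_antimono_le[of "cf_beta \<theta>", OF less_imp_le[OF cf_beta_Suc_less] assms] .
  ultimately show ?thesis
    by linarith
qed

lemma dnint_cf_q:
  assumes "n \<ge> 1"
  shows "dnint (real (cf_q \<theta> n) * \<theta>) = cf_beta \<theta> n"
proof -
  have e: "real (cf_q \<theta> n) * \<theta> = of_int (cf_p \<theta> n) + (-1) ^ n * cf_beta \<theta> n"
    using cf_q_theta_minus_p[of n] by simp
  have b: "0 < cf_beta \<theta> n" "cf_beta \<theta> n < 1 / 2"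
    using cf_beta_pos cf_beta_less_half[OF assms] by auto
  show ?thesis
  proof (cases "even n")
    case True
    then have "\<lfloor>real (cf_q \<theta> n) * \<theta>\<rfloor> = cf_p \<theta> n"
      using b by (intro floor_unique) (auto simp: e)
    then show ?thesis
      using True b by (simp add: dnint_def frac_def e)
  next
    case False
    then have "\<lfloor>real (cf_q \<theta> n) * \<theta>\<rfloor> = cf_p \<theta> n - 1"
      using b by (intro floor_unique) (auto simp: e)
    then show ?thesis
      using False b by (simp add: dnint_def frac_def e)
  qed
qed

lemma cf_rt_mult_cf_q_le: "(cf_rt \<theta> (Suc n) + 1) * cf_q \<theta> n \<le> cf_q \<theta> (Suc n)"
proof -
  have "(cf_rt \<theta> (Suc n) + 1) * cf_q \<theta> n \<le> cf_a \<theta> (Suc n) * cf_q \<theta> n"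
    using cf_rt_less_cf_a[OF cf_a_ge_1[of "Suc n"]] by (intro mult_le_mono1) simp
  then show ?thesis
    using cf_a_mult_cf_q_le[of \<theta> n] by linarith
qed

end

fun fib_sets :: "(nat \<Rightarrow> nat) \<Rightarrow> nat set \<Rightarrow> nat set \<Rightarrow> nat \<Rightarrow> nat set" where
  "fib_sets Q A B 0 = A"
| "fib_sets Q A B (Suc 0) = B"
| "fib_sets Q A B (Suc (Suc n)) = fib_sets Q A B (Suc n) \<union> (+) (Q (Suc n)) ` fib_sets Q A B n"

lemma finite_fib_sets: "finite A \<Longrightarrow> finite B \<Longrightarrow> finite (fib_sets Q A B n)"
  by (induction Q A B n rule: fib_sets.induct) auto

lemma card_fib_sets:
  assumes "finite A" "finite B" "card B = card A + d"
    and below: "\<And>n c. c \<in> fib_sets Q A B (Suc n) \<Longrightarrow> c < Q (Suc n)"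
  shows "card (fib_sets Q A B n) = fib n * d + fib (Suc n) * card A"
proof (induction n rule: fib.induct)
  case (3 n)
  let ?F = "fib_sets Q A B"
  have "?F (Suc n) \<inter> (+) (Q (Suc n)) ` ?F n = {}"
    using below by fastforce
  then have "card (?F (Suc (Suc n))) = card (?F (Suc n)) + card ((+) (Q (Suc n)) ` ?F n)"
    using finite_fib_sets[OF assms(1,2)] by (simp add: card_Un_disjoint)
  also have "card ((+) (Q (Suc n)) ` ?F n) = card (?F n)"
    by (simp add: card_image)
  finally show ?case
    using "3.IH" by (simp add: algebra_simps)
qed (use assms(3) in simp_all)

definition window_admissible :: "real \<Rightarrow> nat \<Rightarrow> real \<Rightarrow> real \<Rightarrow> nat \<Rightarrow> nat \<Rightarrow> bool" where
  "window_admissible \<theta> k Lo Hi m c \<longleftrightarrow> c + cf_q \<theta> k \<le> cf_q \<theta> m \<and>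
     (\<exists>z::int. cf_beta \<theta> m - Lo \<le> real c * \<theta> - of_int z \<and>
               real c * \<theta> - of_int z \<le> Hi - cf_beta \<theta> m)"

context irrational_unit_interval
begin

lemma window_admissible_Suc:
  assumes "window_admissible \<theta> k Lo Hi m c"
  shows "window_admissible \<theta> k Lo Hi (Suc m) c"
proof -
  have "cf_q \<theta> m \<le> cf_q \<theta> (Suc m)"
    by (rule cf_q_le_Suc)
  moreover have "cf_beta \<theta> (Suc m) \<le> cf_beta \<theta> m"
    using cf_beta_Suc_less less_imp_le by blast
  ultimately show ?thesis
    using assms unfolding window_admissible_def by (meson order_trans diff_mono order_refl)
qed

lemma window_admissible_shift:
  assumes "window_admissible \<theta> k Lo Hi m c"
  shows "window_admissible \<theta> k Lo Hi (Suc (Suc m)) (cf_q \<theta> (Suc m) + c)"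
proof -
  obtain z :: int where c: "c + cf_q \<theta> k \<le> cf_q \<theta> m"
    "cf_beta \<theta> m - Lo \<le> real c * \<theta> - of_int z" "real c * \<theta> - of_int z \<le> Hi - cf_beta \<theta> m"
    using assms unfolding window_admissible_def by blast
  define e where "e = real (cf_q \<theta> (Suc m)) * \<theta> - of_int (cf_p \<theta> (Suc m))"
  have "\<bar>e\<bar> = cf_beta \<theta> (Suc m)"
    unfolding e_def by (rule abs_cf_q_theta_minus_p)
  moreover have "real (cf_q \<theta> (Suc m) + c) * \<theta> - of_int (z + cf_p \<theta> (Suc m))
      = (real c * \<theta> - of_int z) + e"
    unfolding e_def by (simp add: algebra_simps)
  moreover have "cf_q \<theta> (Suc m) + c + cf_q \<theta> k \<le> cf_q \<theta> (Suc (Suc m))"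
    using cf_q_add_le[of m] c(1) by linarith
  ultimately show ?thesis
    using c(2,3) cf_beta_add_le[of m] unfolding window_admissible_def
    by (intro conjI exI[of _ "z + cf_p \<theta> (Suc m)"]) auto
qed

lemma window_admissible_in_window:
  assumes "window_admissible \<theta> k Lo Hi m c" "1 \<le> i" "i \<le> cf_q \<theta> k"
  shows "i + c \<in> {j \<in> {1..cf_q \<theta> m}. torus_in (real j * \<theta>) (real i * \<theta>) Lo Hi}"
proof -
  obtain z :: int where c: "c + cf_q \<theta> k \<le> cf_q \<theta> m"
    "cf_beta \<theta> m - Lo \<le> real c * \<theta> - of_int z" "real c * \<theta> - of_int z \<le> Hi - cf_beta \<theta> m"
    using assms(1) unfolding window_admissible_def by blast
  have "real (i + c) * \<theta> + of_int (- z) = real i * \<theta> + (real c * \<theta> - of_int z)"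
    by (simp add: algebra_simps)
  then have "torus_in (real (i + c) * \<theta>) (real i * \<theta>) Lo Hi"
    using c(2,3) cf_beta_pos[of m] unfolding torus_in_def by (intro exI[of _ "- z"]) linarith
  then show ?thesis
    using assms(2,3) c(1) by auto
qed

lemma fib_sets_admissible:
  assumes "\<forall>c\<in>A. window_admissible \<theta> k Lo Hi (k + 1) c"
    and "\<forall>c\<in>B. window_admissible \<theta> k Lo Hi (k + 2) c"
  shows "\<forall>c\<in>fib_sets (\<lambda>n. cf_q \<theta> (k + n + 1)) A B n. window_admissible \<theta> k Lo Hi (k + n + 1) c"
proof (induction n rule: fib.induct)
  case (3 n)
  then show ?case
    using window_admissible_Suc window_admissible_shift[of k Lo Hi "k + n + 1"]
    by (auto simp: add.assoc)
qed (use assms in simp_all)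

lemma card_window_ge_fib:
  assumes "finite A" "finite B" "card B = card A + d"
    and "\<forall>c\<in>A. window_admissible \<theta> k Lo Hi (k + 1) c"
    and "\<forall>c\<in>B. window_admissible \<theta> k Lo Hi (k + 2) c"
    and "l \<ge> 1" "1 \<le> i" "i \<le> cf_q \<theta> k"
  shows "card {j \<in> {1..cf_q \<theta> (k + l)}. torus_in (real j * \<theta>) (real i * \<theta>) Lo Hi}
           \<ge> fib (l - 1) * d + fib l * card A"
proof -
  define F where "F = fib_sets (\<lambda>n. cf_q \<theta> (k + n + 1)) A B"
  have adm: "\<forall>c\<in>F n. window_admissible \<theta> k Lo Hi (k + n + 1) c" for n
    unfolding F_def by (rule fib_sets_admissible[OF assms(4,5)])
  have "c < cf_q \<theta> (k + Suc n + 1)" if "c \<in> F (Suc n)" for n c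
    using adm[of "Suc n"] that cf_q_ge_1[of k] unfolding window_admissible_def by fastforce
  then have card_F: "card (F (l - 1)) = fib (l - 1) * d + fib l * card A"
    using card_fib_sets[OF assms(1-3)] assms(6) unfolding F_def by simp
  have "(+) i ` F (l - 1) \<subseteq> {j \<in> {1..cf_q \<theta> (k + l)}. torus_in (real j * \<theta>) (real i * \<theta>) Lo Hi}"
    using window_admissible_in_window[OF _ assms(7,8)] adm[of "l - 1"] assms(6) by auto
  then have "card ((+) i ` F (l - 1)) \<le> card {j \<in> {1..cf_q \<theta> (k + l)}. torus_in (real j * \<theta>) (real i * \<theta>) Lo Hi}"
    by (intro card_mono) auto
  then show ?thesis
    using card_F by (simp add: card_image)
qed

lemma multiples_admissible:
  assumes "even k" "(r + 1) * cf_q \<theta> k \<le> cf_q \<theta> (k + 1)" "cf_beta \<theta> (k + 1) \<le> Lo" "t \<le> r"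
  shows "window_admissible \<theta> k Lo (real r * cf_beta \<theta> k + cf_beta \<theta> (k + 1)) (k + 1) (t * cf_q \<theta> k)"
proof -
  have "t * cf_q \<theta> k \<le> r * cf_q \<theta> k"
    using assms(4) by (rule mult_le_mono1)
  moreover have "r * cf_q \<theta> k + cf_q \<theta> k \<le> cf_q \<theta> (k + 1)"
    using assms(2) by simp
  ultimately have range: "t * cf_q \<theta> k + cf_q \<theta> k \<le> cf_q \<theta> (k + 1)"
    by linarith
  have "real (t * cf_q \<theta> k) * \<theta> - of_int (int t * cf_p \<theta> k)
      = real t * (real (cf_q \<theta> k) * \<theta> - of_int (cf_p \<theta> k))"
    by (simp add: algebra_simps)
  also have "\<dots> = real t * cf_beta \<theta> k"
    using cf_q_theta_minus_p[of k] assms(1) by simp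
  finally have distance: "real (t * cf_q \<theta> k) * \<theta> - of_int (int t * cf_p \<theta> k) = real t * cf_beta \<theta> k" .
  have "0 \<le> real t * cf_beta \<theta> k" "real t * cf_beta \<theta> k \<le> real r * cf_beta \<theta> k"
    using assms(4) cf_beta_pos[of k] by simp_all
  then show ?thesis
    using range distance assms(3) unfolding window_admissible_def
    by (intro conjI exI[of _ "int t * cf_p \<theta> k"]) auto
qed

lemma shifted_multiples_admissible:
  assumes "even k" "(t + 1) * cf_q \<theta> k + cf_q \<theta> (k + 1) \<le> cf_q \<theta> (k + 2)"
    and "cf_beta \<theta> (k + 1) + cf_beta \<theta> (k + 2) \<le> Lo" "t \<le> r"
  shows "window_admissible \<theta> k Lo (real r * cf_beta \<theta> k + cf_beta \<theta> (k + 1)) (k + 2)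
           (cf_q \<theta> (k + 1) + t * cf_q \<theta> k)"
proof -
  have "real (cf_q \<theta> (k + 1) + t * cf_q \<theta> k) * \<theta> - of_int (cf_p \<theta> (k + 1) + int t * cf_p \<theta> k)
      = (real (cf_q \<theta> (k + 1)) * \<theta> - of_int (cf_p \<theta> (k + 1)))
        + real t * (real (cf_q \<theta> k) * \<theta> - of_int (cf_p \<theta> k))"
    by (simp add: algebra_simps)
  also have "\<dots> = real t * cf_beta \<theta> k - cf_beta \<theta> (k + 1)"
    using cf_q_theta_minus_p[of k] cf_q_theta_minus_p[of "k + 1"] assms(1) by simp
  finally have "real (cf_q \<theta> (k + 1) + t * cf_q \<theta> k) * \<theta> - of_int (cf_p \<theta> (k + 1) + int t * cf_p \<theta> k)
      = real t * cf_beta \<theta> k - cf_beta \<theta> (k + 1)" .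
  moreover have "cf_q \<theta> (k + 1) + t * cf_q \<theta> k + cf_q \<theta> k \<le> cf_q \<theta> (k + 2)"
    using assms(2) by (simp add: algebra_simps)
  moreover have "0 \<le> real t * cf_beta \<theta> k" "real t * cf_beta \<theta> k \<le> real r * cf_beta \<theta> k"
    using assms(4) cf_beta_pos[of k] by simp_all
  moreover have "cf_beta \<theta> (k + 2) < cf_beta \<theta> (k + 1)"
    using cf_beta_Suc_less[of "k + 1"] by simp
  ultimately show ?thesis
    using assms(3) cf_beta_pos[of "k + 2"] unfolding window_admissible_def
    by (intro conjI exI[of _ "cf_p \<theta> (k + 1) + int t * cf_p \<theta> k"]) linarith+
qed

lemma card_window_multiples:
  assumes "even k" "(r + 1) * cf_q \<theta> k \<le> cf_q \<theta> (k + 1)"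
    and "s \<le> r" "(s + 1) * cf_q \<theta> k + cf_q \<theta> (k + 1) \<le> cf_q \<theta> (k + 2)"
    and "cf_beta \<theta> (k + 1) + cf_beta \<theta> (k + 2) \<le> Lo"
    and "l \<ge> 1" "1 \<le> i" "i \<le> cf_q \<theta> k"
  shows "card {j \<in> {1..cf_q \<theta> (k + l)}.
             torus_in (real j * \<theta>) (real i * \<theta>) Lo (real r * cf_beta \<theta> k + cf_beta \<theta> (k + 1))}
           \<ge> fib (l - 1) * (s + 1) + fib l * (r + 1)"
proof -
  define A where "A = (\<lambda>t. t * cf_q \<theta> k) ` {..r}"
  define S where "S = (\<lambda>t. cf_q \<theta> (k + 1) + t * cf_q \<theta> k) ` {..s}"
  have q_pos: "cf_q \<theta> k \<ge> 1"
    by (rule cf_q_ge_1)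
  have card_A: "card A = r + 1"
    unfolding A_def using q_pos by (subst card_image) (auto simp: inj_on_def)
  have card_S: "card S = s + 1"
    unfolding S_def using q_pos by (subst card_image) (auto simp: inj_on_def)
  define Hi where "Hi = real r * cf_beta \<theta> k + cf_beta \<theta> (k + 1)"
  have adm_A: "\<forall>c\<in>A. window_admissible \<theta> k Lo Hi (k + 1) c"
    using multiples_admissible[OF assms(1,2)] assms(5) cf_beta_pos[of "k + 2"]
    unfolding A_def Hi_def by auto
  then have "c < cf_q \<theta> (k + 1)" if "c \<in> A" for c
    using that q_pos unfolding window_admissible_def by fastforce
  then have "A \<inter> S = {}"
    unfolding S_def by fastforce
  then have card_AS: "card (A \<union> S) = card A + (s + 1)"
    using card_S by (simp add: card_Un_disjoint A_def S_def)
  have "window_admissible \<theta> k Lo Hi (k + 2) c" if "c \<in> S" for c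
  proof -
    obtain t where t: "t \<le> s" "c = cf_q \<theta> (k + 1) + t * cf_q \<theta> k"
      using \<open>c \<in> S\<close> unfolding S_def by auto
    have "(t + 1) * cf_q \<theta> k \<le> (s + 1) * cf_q \<theta> k"
      using t(1) by (intro mult_le_mono1) simp
    then have "(t + 1) * cf_q \<theta> k + cf_q \<theta> (k + 1) \<le> cf_q \<theta> (k + 2)"
      using assms(4) by linarith
    then show ?thesis
      using shifted_multiples_admissible[OF assms(1) _ assms(5)] t assms(3) unfolding Hi_def by simp
  qed
  then have adm_AS: "\<forall>c\<in>A \<union> S. window_admissible \<theta> k Lo Hi (k + 2) c"
    using adm_A window_admissible_Suc by auto
  have "finite A" "finite (A \<union> S)"
    unfolding A_def S_def by simp_all
  from card_window_ge_fib[OF this card_AS adm_A adm_AS assms(6-8)] show ?thesis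
    unfolding card_A Hi_def .
qed

end

theorem lemma4p3:
  fixes \<theta> :: real and k l i :: nat
  assumes "0 < \<theta>" "\<theta> < 1" "\<theta> \<notin> \<rat>"
    and "k \<ge> 1" "even k" "l \<ge> 1" "1 \<le> i" "i \<le> cf_q \<theta> k"
  shows "((\<forall>j. 2 \<le> j \<and> j \<le> l \<longrightarrow> cf_a \<theta> (k + j) = 1) \<longrightarrow>
           card {j \<in> {1..cf_q \<theta> (k + l)}.
                   torus_in (real j * \<theta>) (real i * \<theta>) (dnint (real (cf_q \<theta> k) * \<theta>))
                     (real (cf_rt \<theta> (k + 1)) * dnint (real (cf_q \<theta> k) * \<theta>)
                       + dnint (real (cf_q \<theta> (k + 1)) * \<theta>))}
             \<ge> fib l * cf_rt \<theta> (k + 1) + fib (l + 1))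
       \<and> ((cf_a \<theta> (k + 2) = 2 \<and> (\<forall>j. 3 \<le> j \<and> j \<le> l \<longrightarrow> cf_a \<theta> (k + j) = 1)) \<longrightarrow>
           card {j \<in> {1..cf_q \<theta> (k + l)}.
                   torus_in (real j * \<theta>) (real i * \<theta>)
                     (dnint (real (cf_q \<theta> (k + 1)) * \<theta>) + dnint (real (cf_q \<theta> (k + 2)) * \<theta>))
                     (real (cf_rt \<theta> (k + 1)) * dnint (real (cf_q \<theta> k) * \<theta>)
                       + dnint (real (cf_q \<theta> (k + 1)) * \<theta>))}
             \<ge> fib (l + 1) * (cf_rt \<theta> (k + 1) + 1))"
proof -
  interpret irrational_unit_interval \<theta>
    using assms(1-3) by unfold_locales
  define r where "r = cf_rt \<theta> (k + 1)"
  have r_bound: "(r + 1) * cf_q \<theta> k \<le> cf_q \<theta> (k + 1)"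
    using cf_rt_mult_cf_q_le[of k] unfolding r_def by simp
  have q_add: "(0 + 1) * cf_q \<theta> k + cf_q \<theta> (k + 1) \<le> cf_q \<theta> (k + 2)"
    using cf_q_add_le[of k] by (simp add: numeral_eq_Suc del: cf_q.simps)
  have beta_add: "cf_beta \<theta> (k + 1) + cf_beta \<theta> (k + 2) \<le> cf_beta \<theta> k"
    using cf_beta_add_le[of k] by (simp add: numeral_eq_Suc)
  have dnint_eqs: "dnint (real (cf_q \<theta> k) * \<theta>) = cf_beta \<theta> k"
    "dnint (real (cf_q \<theta> (k + 1)) * \<theta>) = cf_beta \<theta> (k + 1)"
    "dnint (real (cf_q \<theta> (k + 2)) * \<theta>) = cf_beta \<theta> (k + 2)"
    using assms(4) by (simp_all add: dnint_cf_q del: cf_q.simps)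
  have fib_l: "fib (l + 1) = fib l + fib (l - 1)"
    using assms(6) by (cases l) simp_all
  have "fib (l - 1) * (0 + 1) + fib l * (r + 1) \<le> card {j \<in> {1..cf_q \<theta> (k + l)}.
      torus_in (real j * \<theta>) (real i * \<theta>) (cf_beta \<theta> k) (real r * cf_beta \<theta> k + cf_beta \<theta> (k + 1))}"
    by (rule card_window_multiples[OF assms(5) r_bound _ q_add beta_add assms(6-8)]) simp
  moreover have "fib (l - 1) * (r + 1) + fib l * (r + 1) \<le> card {j \<in> {1..cf_q \<theta> (k + l)}.
      torus_in (real j * \<theta>) (real i * \<theta>) (cf_beta \<theta> (k + 1) + cf_beta \<theta> (k + 2))
        (real r * cf_beta \<theta> k + cf_beta \<theta> (k + 1))}"
    if "cf_a \<theta> (k + 2) = 2"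
  proof (rule card_window_multiples[OF assms(5) r_bound order_refl _ order_refl assms(6-8)])
    have "cf_q \<theta> (k + 2) = 2 * cf_q \<theta> (k + 1) + cf_q \<theta> k"
      using that by (simp add: numeral_eq_Suc)
    then show "(r + 1) * cf_q \<theta> k + cf_q \<theta> (k + 1) \<le> cf_q \<theta> (k + 2)"
      using r_bound by linarith
  qed
  ultimately show ?thesis
    unfolding dnint_eqs r_def[symmetric] using fib_l by (simp add: algebra_simps)
qed

end
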